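(* Let $f$ and $g$ be convex, continuous, decreasing, symmetric trade-off functions, with $g$ strictly decreasing on $[0,1]$, and let $a^*$ be the fixed point $g(a^* )=a^*$. Suppose $0<\delta<a^*$ and $$f(a)\ge g(a+\delta)-\delta\quad\text{for all }a\in[a^*-\delta,1-\delta].$$ Let $h(a)=\max\{g(a+\delta)-\delta,0\}$, $\hat\delta=\max\{\delta/a^*,\,(1-g(\delta))+\delta\}$, and $k(a)=(1-\hat\delta)\,g\big(\frac{a}{1-\hat\delta}\big)$ for $a\le1-\hat\delta$, $k(a)=0$ for $a\ge1-\hat\delta$. Then $h$ and $k$ are convex, continuous, decreasing, symmetric trade-off functions, and for all $a\in[0,1]$, $$f(a)\ge h(a)\ge k(a)=(g\otimes f_{0,\hat\delta})(a),$$ where $f_{0,\hat\delta}(a)=\max\{1-a-\hat\delta,0\}$ is the trade-off function of $U(0,1)$ versus $U(\hat\delta,1+\hat\delta)$.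
   Context: For distributions $P,Q$ the trade-off function is $T(P,Q)(a)=\inf\{\beta(\phi):\alpha(\phi)\le a\}$ over rejection rules $\phi$ with $\alpha(\phi)=\mathbb E_P[\phi]$, $\beta(\phi)=1-\mathbb E_Q[\phi]$; trade-off functions are exactly the convex, continuous, non-increasing $f:[0,1]\to[0,1]$ with $f(a)\le1-a$. A trade-off function $g$ is symmetric if $g=g^{-1}$, where $g^{-1}(a)=\inf\{t\in[0,1]:g(t)\le a\}$. For $f=T(P,Q)$, $g=T(P',Q')$, $f\otimes g=T(P\times P',Q\times Q')$. *)

theory Defs
  imports "HOL-Probability.Probability"
begin

definition tradeoff :: "'a measure \<Rightarrow> 'a measure \<Rightarrow> real \<Rightarrow> real" where
  "tradeoff P Q a = Inf {1 - (\<integral>x. \<phi> x \<partial>Q) | \<phi>.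
      \<phi> \<in> borel_measurable P \<and> (\<forall>x\<in>space P. 0 \<le> \<phi> x \<and> \<phi> x \<le> 1)
      \<and> (\<integral>x. \<phi> x \<partial>P) \<le> a}"

text \<open>Trade-off functions on [0,1], via the characterisation recalled in the paper:
  convex, continuous, non-increasing, valued in [0,1], with f a \<le> 1 - a.\<close>
definition is_tradeoff :: "(real \<Rightarrow> real) \<Rightarrow> bool" where
  "is_tradeoff f \<longleftrightarrow> convex_on {0..1} f \<and> continuous_on {0..1} f
     \<and> (\<forall>x\<in>{0..1}. \<forall>y\<in>{0..1}. x \<le> y \<longrightarrow> f y \<le> f x)
     \<and> (\<forall>a\<in>{0..1}. 0 \<le> f a \<and> f a \<le> 1 - a)"

definition tinv :: "(real \<Rightarrow> real) \<Rightarrow> real \<Rightarrow> real" where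
  "tinv g a = Inf {t \<in> {0..1}. g t \<le> a}"

definition symmetric_tradeoff :: "(real \<Rightarrow> real) \<Rightarrow> bool" where
  "symmetric_tradeoff g \<longleftrightarrow> (\<forall>a\<in>{0..1}. g a = tinv g a)"

definition unif :: "real \<Rightarrow> real measure" where
  "unif l = uniform_measure lborel {l..l+1}"

end

theory Submission
  imports Defs
begin

(* Two symmetric trade-off functions F, H can be compared from one side only: if F a < H a,
   then F (F a) <= a < H (F a), so F moves a to another point where F < H. Hence an inequality
   H <= F that holds on [c, 1] with c <= H c, or on [0, c] with H c <= c, holds on all of [0, 1].

   Both h and k are affine rescalings of the graph of g that keep it a symmetric trade-off
   function. The hypothesis gives f >= h on [a* - delta, 1], where h (a* - delta) = a* - delta,
   and a convexity estimate gives h >= k on [0, (1 - dhat) a*], where k has its fixed point.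

   For the product, any test on P x U(0, 1) versus Q x U(dhat, 1 + dhat) is dominated by one
   that rejects on (1, 1 + dhat) and, on [dhat, 1] where both uniform densities equal 1, depends
   only on the first coordinate; such tests are tests for P versus Q scaled by 1 - dhat. This
   yields exactly k. *)

lemma convex_on_max:
  assumes "convex_on S f" "convex_on S g"
  shows "convex_on S (\<lambda>x. max (f x) (g x))"
proof -
  have "max (f (u *\<^sub>R x + v *\<^sub>R y)) (g (u *\<^sub>R x + v *\<^sub>R y))
      \<le> u * max (f x) (g x) + v * max (f y) (g y)"
    if "x \<in> S" "y \<in> S" "u \<ge> 0" "v \<ge> 0" "u + v = 1" for x y u v
  proof -
    have "f (u *\<^sub>R x + v *\<^sub>R y) \<le> u * f x + v * f y" "g (u *\<^sub>R x + v *\<^sub>R y) \<le> u * g x + v * g y"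
      using assms that by (auto simp: convex_on_def)
    moreover have "u * f x + v * f y \<le> u * max (f x) (g x) + v * max (f y) (g y)"
      "u * g x + v * g y \<le> u * max (f x) (g x) + v * max (f y) (g y)"
      using that by (intro add_mono mult_left_mono; simp)+
    ultimately show ?thesis by linarith
  qed
  then show ?thesis using assms by (auto simp: convex_on_def)
qed

section \<open>Trade-off functions and their generalised inverse\<close>

lemma is_tradeoffD:
  assumes "is_tradeoff g"
  shows "convex_on {0..1} g" "continuous_on {0..1} g"
    and "\<And>x y. 0 \<le> x \<Longrightarrow> x \<le> y \<Longrightarrow> y \<le> 1 \<Longrightarrow> g y \<le> g x"
    and "\<And>a. 0 \<le> a \<Longrightarrow> a \<le> 1 \<Longrightarrow> 0 \<le> g a"
    and "\<And>a. 0 \<le> a \<Longrightarrow> a \<le> 1 \<Longrightarrow> g a \<le> 1 - a"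
    and "g 1 = 0"
  using assms unfolding is_tradeoff_def by (auto dest: bspec[of _ _ 1])

lemma is_tradeoff_cong:
  assumes eq: "\<And>x. x \<in> {0..1} \<Longrightarrow> F x = G x"
  shows "is_tradeoff F \<longleftrightarrow> is_tradeoff G"
proof -
  have "u *\<^sub>R x + v *\<^sub>R y \<in> {0..1}"
    if "x \<in> {0..1}" "y \<in> {0..1}" "u \<ge> 0" "v \<ge> 0" "u + v = 1" for x y u v :: real
    using convex_real_interval(5)[of 0 1] that unfolding convex_def by blast
  then have "convex_on {0..1} F \<longleftrightarrow> convex_on {0..1} G"
    unfolding convex_on_def using eq by (metis (no_types, lifting))
  moreover have "continuous_on {0..1} F \<longleftrightarrow> continuous_on {0..1} G"
    by (rule continuous_on_cong) (simp_all add: eq)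
  ultimately show ?thesis unfolding is_tradeoff_def using eq by auto
qed

lemma symmetric_tradeoff_cong:
  assumes "\<And>x. x \<in> {0..1} \<Longrightarrow> F x = G x"
  shows "symmetric_tradeoff F \<longleftrightarrow> symmetric_tradeoff G"
proof -
  have "tinv F b = tinv G b" for b
    unfolding tinv_def using assms by (metis (lifting) mem_Collect_eq)
  then show ?thesis using assms unfolding symmetric_tradeoff_def by auto
qed

lemma tinv_eqI:
  assumes "t \<in> {0..1}" "H t \<le> b" "\<And>t'. t' \<in> {0..1} \<Longrightarrow> H t' \<le> b \<Longrightarrow> t \<le> t'"
  shows "tinv H b = t"
  unfolding tinv_def using assms by (intro cInf_eq_minimum) auto

lemma tradeoff_tinv:
  assumes "is_tradeoff H" "0 \<le> b"
  shows "tinv H b \<in> {0..1}" "H (tinv H b) \<le> b"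
proof -
  let ?S = "{t \<in> {0..1}. H t \<le> b}"
  have "1 \<in> ?S" using assms is_tradeoffD(6)[OF assms(1)] by auto
  moreover have "closed ?S"
    using is_tradeoffD(2)[OF assms(1)] by (intro continuous_on_closed_Collect_le) auto
  ultimately have "Inf ?S \<in> ?S" by (intro closed_contains_Inf) (auto intro: bdd_belowI[of _ 0])
  then show "tinv H b \<in> {0..1}" "H (tinv H b) \<le> b" unfolding tinv_def by auto
qed

lemma symmetric_tradeoffI:
  assumes "is_tradeoff H"
    and adjoint: "\<And>b t. b \<in> {0..1} \<Longrightarrow> t \<in> {0..1} \<Longrightarrow> H t \<le> b \<Longrightarrow> H b \<le> t"
  shows "symmetric_tradeoff H"
  unfolding symmetric_tradeoff_def
proof
  fix b :: real assume b: "b \<in> {0..1}"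
  have Hb: "H b \<in> {0..1}" using is_tradeoffD(4,5)[OF assms(1)] b by fastforce
  show "H b = tinv H b"
    by (rule tinv_eqI[symmetric]) (use Hb b adjoint in auto)
qed

lemma symmetric_tradeoff_reflect:
  assumes F: "is_tradeoff F" "symmetric_tradeoff F" and H: "is_tradeoff H" "symmetric_tradeoff H"
    and a: "a \<in> {0..1}" and less: "F a < H a"
  shows "F a \<in> {0..1}" "F (F a) \<le> a" "a < H (F a)"
proof -
  show Fa: "F a \<in> {0..1}" using is_tradeoffD(4,5)[OF F(1)] a by fastforce
  show "F (F a) \<le> a" using F a tradeoff_tinv(2)[OF F(1), of a] unfolding symmetric_tradeoff_def by auto
  show "a < H (F a)"
  proof (rule ccontr)
    assume "\<not> a < H (F a)"
    moreover have "H (F a) = tinv H (F a)" using H(2) Fa unfolding symmetric_tradeoff_def by auto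
    ultimately have "H a \<le> H (H (F a))"
      using tradeoff_tinv(1)[OF H(1), of "F a"] Fa a by (intro is_tradeoffD(3)[OF H(1)]) auto
    also have "\<dots> \<le> F a"
      using tradeoff_tinv(2)[OF H(1), of "F a"] Fa \<open>H (F a) = tinv H (F a)\<close> by auto
    finally show False using less by simp
  qed
qed

lemma symmetric_tradeoff_le_if_le_above:
  assumes F: "is_tradeoff F" "symmetric_tradeoff F" and H: "is_tradeoff H" "symmetric_tradeoff H"
    and c: "c \<in> {0..1}" "c \<le> H c" and le: "\<forall>x\<in>{c..1}. H x \<le> F x"
    and a: "a \<in> {0..1}"
  shows "H a \<le> F a"
proof (rule ccontr)
  assume "\<not> H a \<le> F a"
  then have less: "F a < H a" by simp
  note reflect = symmetric_tradeoff_reflect[OF F H a less]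
  have "a < c"
  proof (rule ccontr)
    assume "\<not> a < c"
    then have "H a \<le> F a" using le a by auto
    with less show False by simp
  qed
  then have "c \<le> F a" using is_tradeoffD(3)[OF F(1), of a c] le c a by force
  then have "H (F a) \<le> F (F a)" using le reflect(1) by auto
  with reflect show False by linarith
qed

lemma symmetric_tradeoff_le_if_le_below:
  assumes F: "is_tradeoff F" "symmetric_tradeoff F" and H: "is_tradeoff H" "symmetric_tradeoff H"
    and c: "c \<in> {0..1}" "H c \<le> c" and le: "\<forall>x\<in>{0..c}. H x \<le> F x"
    and a: "a \<in> {0..1}"
  shows "H a \<le> F a"
proof (rule ccontr)
  assume "\<not> H a \<le> F a"
  then have less: "F a < H a" by simp
  note reflect = symmetric_tradeoff_reflect[OF F H a less]
  have "c < a"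
  proof (rule ccontr)
    assume "\<not> c < a"
    then have "H a \<le> F a" using le a by auto
    with less show False by simp
  qed
  then have "F a \<le> c" using is_tradeoffD(3)[OF H(1), of c a] less c a by force
  then have "H (F a) \<le> F (F a)" using le reflect(1) by auto
  with reflect show False by linarith
qed

section \<open>Strictly decreasing symmetric trade-off functions\<close>

lemma strict_symmetric_tradeoff_involution:
  assumes g: "is_tradeoff g" "symmetric_tradeoff g" and strict: "strict_antimono_on {0..1} g"
  shows "g 0 = 1" "\<And>x. x \<in> {0..1} \<Longrightarrow> g (g x) = x"
proof -
  have less: "g y < g x" if "x \<in> {0..1}" "y \<in> {0..1}" "x < y" for x y
    using strict that by (auto simp: monotone_on_def)
  have tinv_at: "tinv g (g t) = t" if t: "t \<in> {0..1}" for t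
    by (rule tinv_eqI) (use t less in \<open>auto simp: not_le[symmetric]\<close>)
  have "g 0 = tinv g (g 1)" using g(2) is_tradeoffD(6)[OF g(1)] unfolding symmetric_tradeoff_def by auto
  then show g0: "g 0 = 1" using tinv_at[of 1] by simp
  fix x :: real assume x: "x \<in> {0..1}"
  obtain t where t: "t \<in> {0..1}" "g t = x"
    using IVT2'[of g 1 x 0] is_tradeoffD(2,6)[OF g(1)] g0 x by auto
  have "g x = tinv g x" using g(2) x unfolding symmetric_tradeoff_def by auto
  then show "g (g x) = x" using tinv_at[OF t(1)] t by simp
qed

lemma strict_symmetric_tradeoff_adjoint:
  assumes g: "is_tradeoff g" "symmetric_tradeoff g" and strict: "strict_antimono_on {0..1} g"
    and "0 \<le> t" "0 \<le> b" and le: "g (min t 1) \<le> b"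
  shows "g (min b 1) \<le> t"
proof (cases "b < 1 \<and> t < 1")
  case True
  then have "g b \<le> g (g t)"
    using le is_tradeoffD(3-5)[OF g(1)] assms(4,5) by (intro is_tradeoffD(3)[OF g(1)]) auto
  then show ?thesis
    using True strict_symmetric_tradeoff_involution(2)[OF g strict, of t] assms(4) by auto
next
  case False
  then consider "1 \<le> b" | "1 \<le> t" by linarith
  then show ?thesis
  proof cases
    case 1
    then show ?thesis using is_tradeoffD(6)[OF g(1)] \<open>0 \<le> t\<close> by (simp add: min_def)
  next
    case 2
    have "g (min b 1) \<le> 1 - min b 1" using is_tradeoffD(5)[OF g(1)] \<open>0 \<le> b\<close> by simp
    with 2 \<open>0 \<le> b\<close> show ?thesis by linarith
  qed
qed

section \<open>Affine rescaling of a trade-off function\<close>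

text \<open>The graph of \<open>g\<close>, extended by \<open>0\<close> beyond \<open>1\<close>, transformed by \<open>u \<mapsto> c u - e\<close> in both
  coordinates and clipped at \<open>0\<close>. The two functions of the theorem are \<open>h = tradeoff_rescale 1 \<delta> g\<close>
  and \<open>k = tradeoff_rescale (1 - dhat) 0 g\<close>.\<close>
definition tradeoff_rescale :: "real \<Rightarrow> real \<Rightarrow> (real \<Rightarrow> real) \<Rightarrow> real \<Rightarrow> real" where
  "tradeoff_rescale c e g a = max (c * g (min ((a + e) / c) 1) - e) 0"

lemma tradeoff_rescale_shift: "tradeoff_rescale 1 e g a = max (g (min (a + e) 1) - e) 0"
  by (simp add: tradeoff_rescale_def)

lemma tradeoff_rescale_scale:
  assumes "is_tradeoff g" "0 < s" "0 \<le> a"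
  shows "tradeoff_rescale s 0 g a = (if a \<le> s then s * g (a / s) else 0)"
proof (cases "a \<le> s")
  case True
  then have "a / s \<le> 1" using assms by (simp add: divide_le_eq)
  then show ?thesis
    using True assms is_tradeoffD(4)[OF assms(1), of "a / s"] by (simp add: tradeoff_rescale_def)
next
  case False
  then have "1 \<le> a / s" using assms by (simp add: le_divide_eq)
  then show ?thesis using False is_tradeoffD(6)[OF assms(1)] by (simp add: tradeoff_rescale_def min_def)
qed

lemma convex_on_tradeoff_affine:
  assumes g: "is_tradeoff g" and "0 < c" "0 \<le> e"
  shows "convex_on {0..1} (\<lambda>a. g (min ((a + e) / c) 1))"
proof (rule convex_onI)
  define m where "m a = min ((a + e) / c) 1" for a
  have m01: "m a \<in> {0..1}" if "0 \<le> a" for a using assms that unfolding m_def by auto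
  fix t x y :: real assume t: "0 < t" "t < 1" and x: "x \<in> {0..1}" and y: "y \<in> {0..1}"
  let ?z = "(1 - t) *\<^sub>R x + t *\<^sub>R y" and ?w = "(1 - t) * m x + t * m y"
  have "?w \<le> (1 - t) * ((x + e) / c) + t * ((y + e) / c)" "?w \<le> (1 - t) * 1 + t * 1"
    using t unfolding m_def by (intro add_mono mult_left_mono; simp)+
  moreover have "(1 - t) * ((x + e) / c) + t * ((y + e) / c) = (?z + e) / c"
    using assms by (simp add: field_simps)
  ultimately have "?w \<le> m ?z" unfolding m_def by simp
  moreover have "?w \<in> {0..1}" using m01[of x] m01[of y] x y t by (auto intro: convex_bound_le)
  moreover have "0 \<le> ?z" using x y t by simp
  ultimately have "g (m ?z) \<le> g ?w" using m01 by (intro is_tradeoffD(3)[OF g]) auto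
  also have "\<dots> \<le> (1 - t) * g (m x) + t * g (m y)"
    using convex_onD[OF is_tradeoffD(1)[OF g], of t "m x" "m y"] t m01 x y by auto
  finally show "g (min ((?z + e) / c) 1) \<le> (1 - t) * g (min ((x + e) / c) 1) + t * g (min ((y + e) / c) 1)"
    unfolding m_def .
qed auto

lemma is_tradeoff_rescale:
  assumes g: "is_tradeoff g" and c: "0 < c" "c \<le> 1" and e: "0 \<le> e"
  shows "is_tradeoff (tradeoff_rescale c e g)"
  unfolding is_tradeoff_def
proof (intro conjI ballI impI)
  let ?G = "\<lambda>a. g (min ((a + e) / c) 1)"
  have G_eq: "tradeoff_rescale c e g = (\<lambda>a. max (c * ?G a - e) 0)"
    by (simp add: tradeoff_rescale_def fun_eq_iff)
  show "convex_on {0..1} (tradeoff_rescale c e g)"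
    unfolding G_eq using c e convex_on_tradeoff_affine[OF g c(1) e]
    by (intro convex_on_max convex_on_diff convex_on_cmul) (auto simp: concave_on_const convex_on_const)
  have "continuous_on {0..1} ?G"
    by (rule continuous_on_compose2[OF is_tradeoffD(2)[OF g]])
      (use c e in \<open>auto intro!: continuous_intros\<close>)
  then show "continuous_on {0..1} (tradeoff_rescale c e g)"
    unfolding G_eq by (intro continuous_intros)
  fix x y :: real assume xy: "x \<in> {0..1}" "y \<in> {0..1}" "x \<le> y"
  then have "(x + e) / c \<le> (y + e) / c" using c by (simp add: divide_right_mono)
  then have "?G y \<le> ?G x" using xy c e by (intro is_tradeoffD(3)[OF g]) auto
  then have "c * ?G y - e \<le> c * ?G x - e" using c by simp
  then show "tradeoff_rescale c e g y \<le> tradeoff_rescale c e g x"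
    unfolding G_eq by (intro max.mono) simp_all
next
  fix a :: real assume a: "a \<in> {0..1}"
  show "0 \<le> tradeoff_rescale c e g a" by (simp add: tradeoff_rescale_def)
  show "tradeoff_rescale c e g a \<le> 1 - a"
  proof (cases "(a + e) / c \<le> 1")
    case True
    have "c * g ((a + e) / c) \<le> c * (1 - (a + e) / c)"
      using True a c e is_tradeoffD(5)[OF g, of "(a + e) / c"] by (intro mult_left_mono) auto
    also have "\<dots> = c - (a + e)" using c by (simp add: right_diff_distrib)
    finally show ?thesis using True a c e by (simp add: tradeoff_rescale_def)
  next
    case False
    then show ?thesis using a e is_tradeoffD(6)[OF g] by (simp add: tradeoff_rescale_def)
  qed
qed

lemma symmetric_tradeoff_rescale:
  assumes g: "is_tradeoff g" "symmetric_tradeoff g" and strict: "strict_antimono_on {0..1} g"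
    and c: "0 < c" "c \<le> 1" and e: "0 \<le> e"
  shows "symmetric_tradeoff (tradeoff_rescale c e g)"
proof (rule symmetric_tradeoffI[OF is_tradeoff_rescale[OF g(1) c e]])
  fix b t :: real assume b: "b \<in> {0..1}" and t: "t \<in> {0..1}"
  assume "tradeoff_rescale c e g t \<le> b"
  then have "g (min ((t + e) / c) 1) * c \<le> b + e" by (simp add: tradeoff_rescale_def mult.commute)
  then have "g (min ((t + e) / c) 1) \<le> (b + e) / c" using c by (simp add: pos_le_divide_eq)
  then have "g (min ((b + e) / c) 1) \<le> (t + e) / c"
    by (rule strict_symmetric_tradeoff_adjoint[OF g strict, rotated 2]) (use b t c e in auto)
  then have "g (min ((b + e) / c) 1) * c \<le> t + e" using c by (simp add: pos_le_divide_eq)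
  then show "tradeoff_rescale c e g b \<le> t" using t by (simp add: tradeoff_rescale_def mult.commute)
qed

lemma convex_on_chord_from_zero:
  assumes "convex_on {0..1} g" "0 < x" "x \<le> 1" "0 \<le> y" "y \<le> x"
  shows "g y \<le> (1 - y / x) * g 0 + y / x * g x"
proof -
  have "(1 - y / x) *\<^sub>R 0 + (y / x) *\<^sub>R x = y" using assms(2) by simp
  then show ?thesis
    using convex_onD[OF assms(1), of "y / x" 0 x] assms by (simp add: divide_le_eq)
qed

lemma scaled_tradeoff_le_shifted:
  assumes g: "is_tradeoff g" "g 0 = 1"
    and astar: "0 \<le> astar" "astar \<le> 1" "g astar = astar"
    and \<delta>: "0 < \<delta>" "\<delta> \<le> (1 - s) * astar" and s: "0 < s" "s + \<delta> \<le> g \<delta>"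
    and a: "0 \<le> a" "a \<le> s * astar"
  shows "s * g (a / s) \<le> g (a + \<delta>) - \<delta>"
proof -
  have "s < 1"
  proof (rule ccontr)
    assume "\<not> s < 1"
    then have "(1 - s) * astar \<le> 0" using astar by (simp add: mult_nonpos_nonneg)
    then show False using \<delta> by linarith
  qed
  define x where "x = a + \<delta>"
  define G where "G = g x"
  have "x \<le> astar" using a \<delta> unfolding x_def by (simp add: algebra_simps)
  then have x: "0 < x" "x \<le> 1" and "astar \<le> G"
    using a \<delta> astar is_tradeoffD(3)[OF g(1), of x astar] unfolding x_def G_def by auto
  have "a \<le> s" using a astar s by (smt (verit) mult_left_le)
  then have as: "a / s \<le> 1" using s by (simp add: divide_le_eq)
  show ?thesis
  proof (cases "a / s \<le> x")
    case True
    \<comment> \<open>both \<open>g \<delta>\<close> and \<open>g (a / s)\<close> lie below the chord of \<open>g\<close> over \<open>[0, x]\<close>\<close>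
    have "g \<delta> \<le> (1 - \<delta> / x) + \<delta> / x * G"
      using convex_on_chord_from_zero[OF is_tradeoffD(1)[OF g(1)] x, of \<delta>] g(2) \<delta> a
      unfolding G_def x_def by simp
    then have "x * g \<delta> \<le> x * ((1 - \<delta> / x) + \<delta> / x * G)"
      using x by (simp add: mult_left_mono)
    also have "\<dots> = x - \<delta> + \<delta> * G" using x by (simp add: field_simps)
    finally have "x * g \<delta> \<le> x - \<delta> + \<delta> * G" .
    moreover have "(s + \<delta>) * x \<le> x * g \<delta>" using s(2) x by (simp add: mult.commute mult_left_mono)
    ultimately have "(s + \<delta>) * x \<le> x - \<delta> + \<delta> * G" by linarith
    then have key: "s * x - a * (1 - G) \<le> (G - \<delta>) * x"
      unfolding x_def by (simp add: algebra_simps)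
    have "g (a / s) \<le> (1 - a / s / x) + a / s / x * G"
      using convex_on_chord_from_zero[OF is_tradeoffD(1)[OF g(1)] x, of "a / s"] g(2) True a s
      unfolding G_def by simp
    then have "s * g (a / s) \<le> s * ((1 - a / s / x) + a / s / x * G)"
      using s by (simp add: mult_left_mono)
    also have "\<dots> = (s * x - a * (1 - G)) / x" using s x by (simp add: field_simps)
    also have "\<dots> \<le> G - \<delta>" using key x by (simp add: divide_le_eq)
    finally show ?thesis unfolding G_def x_def .
  next
    case False
    then have "g (a / s) \<le> G" unfolding G_def using x as a s by (intro is_tradeoffD(3)[OF g(1)]) auto
    then have "s * g (a / s) \<le> s * G" using s by (simp add: mult_left_mono)
    also have "\<dots> \<le> G - \<delta>"
      using \<delta> \<open>s < 1\<close> mult_left_mono[OF \<open>astar \<le> G\<close>, of "1 - s"] by (simp add: algebra_simps)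
    finally show ?thesis unfolding G_def x_def .
  qed
qed

lemma tradeoff_rescale_shift_le_tradeoff:
  assumes f: "is_tradeoff f" "symmetric_tradeoff f"
    and g: "is_tradeoff g" "symmetric_tradeoff g" and strict: "strict_antimono_on {0..1} g"
    and astar: "astar \<le> 1" "g astar = astar" and \<delta>: "0 \<le> \<delta>" "\<delta> \<le> astar"
    and le: "\<forall>x\<in>{astar - \<delta>..1 - \<delta>}. g (x + \<delta>) - \<delta> \<le> f x"
    and a: "a \<in> {0..1}"
  shows "tradeoff_rescale 1 \<delta> g a \<le> f a"
proof (rule symmetric_tradeoff_le_if_le_above[OF f _ _ _ _ _ a])
  show "is_tradeoff (tradeoff_rescale 1 \<delta> g)" "symmetric_tradeoff (tradeoff_rescale 1 \<delta> g)"
    using is_tradeoff_rescale[OF g(1)] symmetric_tradeoff_rescale[OF g strict] \<delta> by auto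
  show "astar - \<delta> \<in> {0..1}" "astar - \<delta> \<le> tradeoff_rescale 1 \<delta> g (astar - \<delta>)"
    using astar \<delta> by (auto simp: tradeoff_rescale_shift)
  show "\<forall>x\<in>{astar - \<delta>..1}. tradeoff_rescale 1 \<delta> g x \<le> f x"
  proof
    fix x assume x: "x \<in> {astar - \<delta>..1}"
    have "0 \<le> f x" using is_tradeoffD(4)[OF f(1)] x astar \<delta> by auto
    then show "tradeoff_rescale 1 \<delta> g x \<le> f x"
      using le x \<delta> is_tradeoffD(6)[OF g(1)] by (cases "x \<le> 1 - \<delta>") (auto simp: tradeoff_rescale_shift)
  qed
qed

lemma tradeoff_rescale_scale_le_shift:
  assumes g: "is_tradeoff g" "symmetric_tradeoff g" and strict: "strict_antimono_on {0..1} g"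
    and astar: "0 \<le> astar" "astar \<le> 1" "g astar = astar"
    and \<delta>: "0 < \<delta>" "\<delta> \<le> (1 - s) * astar" and s: "0 < s" "s \<le> 1" "s + \<delta> \<le> g \<delta>"
    and a: "a \<in> {0..1}"
  shows "tradeoff_rescale s 0 g a \<le> tradeoff_rescale 1 \<delta> g a"
proof (rule symmetric_tradeoff_le_if_le_below[OF _ _ _ _ _ _ _ a])
  show "is_tradeoff (tradeoff_rescale 1 \<delta> g)" "symmetric_tradeoff (tradeoff_rescale 1 \<delta> g)"
    "is_tradeoff (tradeoff_rescale s 0 g)" "symmetric_tradeoff (tradeoff_rescale s 0 g)"
    using is_tradeoff_rescale[OF g(1)] symmetric_tradeoff_rescale[OF g strict] \<delta> s by auto
  have "s * astar \<le> s" using s astar by (simp add: mult_left_le)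
  then show "s * astar \<in> {0..1}" "tradeoff_rescale s 0 g (s * astar) \<le> s * astar"
    using s astar by (auto simp: tradeoff_rescale_scale[OF g(1)] mult_le_one)
  show "\<forall>x\<in>{0..s * astar}. tradeoff_rescale s 0 g x \<le> tradeoff_rescale 1 \<delta> g x"
  proof
    fix x assume x: "x \<in> {0..s * astar}"
    have "x + \<delta> \<le> 1" using x \<delta> astar by (auto simp: algebra_simps)
    moreover have "x \<le> s" using x \<open>s * astar \<le> s\<close> by auto
    moreover have "s * g (x / s) \<le> g (x + \<delta>) - \<delta>"
      using scaled_tradeoff_le_shifted[OF g(1) strict_symmetric_tradeoff_involution(1)[OF g strict]
          astar \<delta> s(1,3)] x by auto
    ultimately show "tradeoff_rescale s 0 g x \<le> tradeoff_rescale 1 \<delta> g x"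
      using x s by (simp add: tradeoff_rescale_scale[OF g(1)] tradeoff_rescale_shift)
  qed
qed

section \<open>Rejection rules\<close>

definition rejection_rule :: "'a measure \<Rightarrow> ('a \<Rightarrow> real) \<Rightarrow> bool" where
  "rejection_rule M \<phi> \<longleftrightarrow> \<phi> \<in> borel_measurable M \<and> (\<forall>x\<in>space M. 0 \<le> \<phi> x \<and> \<phi> x \<le> 1)"

lemma tradeoff_eq_Inf:
  "tradeoff P Q a = Inf {1 - (\<integral>x. \<phi> x \<partial>Q) | \<phi>. rejection_rule P \<phi> \<and> (\<integral>x. \<phi> x \<partial>P) \<le> a}"
  unfolding tradeoff_def rejection_rule_def by (simp add: conj_assoc)

lemma rejection_rule_cong_sets:
  assumes "sets M = sets N"
  shows "rejection_rule M \<phi> \<longleftrightarrow> rejection_rule N \<phi>"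
  unfolding rejection_rule_def
  using measurable_cong_sets[OF assms refl, of "borel :: real measure"] sets_eq_imp_space_eq[OF assms]
  by simp

lemma rejection_rule_integral:
  assumes "prob_space M" "rejection_rule M \<phi>"
  shows "integrable M \<phi>" "0 \<le> (\<integral>x. \<phi> x \<partial>M)" "(\<integral>x. \<phi> x \<partial>M) \<le> 1"
proof -
  interpret prob_space M by fact
  have bounds: "\<forall>x\<in>space M. 0 \<le> \<phi> x \<and> \<phi> x \<le> 1" and meas: "\<phi> \<in> borel_measurable M"
    using assms(2) unfolding rejection_rule_def by auto
  show int: "integrable M \<phi>" using bounds by (intro integrable_const_bound[OF _ meas]) auto
  show "0 \<le> (\<integral>x. \<phi> x \<partial>M)" using bounds by (intro Bochner_Integration.integral_nonneg) auto
  have "(\<integral>x. \<phi> x \<partial>M) \<le> (\<integral>x. 1 \<partial>M)" using bounds int by (intro integral_mono) auto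
  then show "(\<integral>x. \<phi> x \<partial>M) \<le> 1" by (simp add: prob_space)
qed

lemma tradeoff_le_rejection_rule:
  assumes "prob_space Q" "sets Q = sets P" "rejection_rule P \<phi>" "(\<integral>x. \<phi> x \<partial>P) \<le> a"
  shows "tradeoff P Q a \<le> 1 - (\<integral>x. \<phi> x \<partial>Q)"
  unfolding tradeoff_eq_Inf
proof (rule cInf_lower)
  show "1 - (\<integral>x. \<phi> x \<partial>Q) \<in> {1 - (\<integral>x. \<phi> x \<partial>Q) | \<phi>. rejection_rule P \<phi> \<and> (\<integral>x. \<phi> x \<partial>P) \<le> a}"
    using assms by blast
  show "bdd_below {1 - (\<integral>x. \<phi> x \<partial>Q) | \<phi>. rejection_rule P \<phi> \<and> (\<integral>x. \<phi> x \<partial>P) \<le> a}"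
  proof (rule bdd_belowI[of _ 0], clarify)
    fix \<psi> assume "rejection_rule P \<psi>"
    then have "rejection_rule Q \<psi>" using rejection_rule_cong_sets[OF assms(2)] by simp
    then show "0 \<le> 1 - (\<integral>x. \<psi> x \<partial>Q)" using rejection_rule_integral(3)[OF assms(1)] by simp
  qed
qed

lemma le_tradeoffI:
  assumes "0 \<le> a"
    and "\<And>\<phi>. rejection_rule P \<phi> \<Longrightarrow> (\<integral>x. \<phi> x \<partial>P) \<le> a \<Longrightarrow> c \<le> 1 - (\<integral>x. \<phi> x \<partial>Q)"
  shows "c \<le> tradeoff P Q a"
  unfolding tradeoff_eq_Inf
proof (rule cInf_greatest)
  have "rejection_rule P (\<lambda>x. 0)" by (simp add: rejection_rule_def)
  then show "{1 - (\<integral>x. \<phi> x \<partial>Q) | \<phi>. rejection_rule P \<phi> \<and> (\<integral>x. \<phi> x \<partial>P) \<le> a} \<noteq> {}"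
    using assms(1) by force
next
  fix y assume "y \<in> {1 - (\<integral>x. \<phi> x \<partial>Q) | \<phi>. rejection_rule P \<phi> \<and> (\<integral>x. \<phi> x \<partial>P) \<le> a}"
  then show "c \<le> y" using assms(2) by blast
qed

section \<open>Uniform location families\<close>

lemma prob_space_unif: "prob_space (unif l)"
  unfolding unif_def by (rule prob_space_uniform_measure) auto

lemma sets_unif [simp, measurable_cong]: "sets (unif l) = sets borel"
  and space_unif [simp]: "space (unif l) = UNIV"
  unfolding unif_def by auto

lemma integral_unif:
  fixes f :: "real \<Rightarrow> real"
  assumes "f \<in> borel_measurable borel"
  shows "(\<integral>x. f x \<partial>unif l) = (\<integral>x. indicator {l..l+1} x * f x \<partial>lborel)"
proof -
  have "unif l = density lborel (\<lambda>x. ennreal (indicator {l..l+1} x))"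
    unfolding unif_def uniform_measure_def by (simp add: ennreal_indicator divide_ennreal_def)
  then show ?thesis using integral_density[of f lborel "indicator {l..l+1}"] assms by simp
qed

lemma integrable_indicator_Icc_mult:
  fixes f :: "real \<Rightarrow> real"
  assumes "f \<in> borel_measurable borel" "\<And>y. \<bar>f y\<bar> \<le> 1"
  shows "integrable lborel (\<lambda>y. indicator {a..b} y * f y)"
proof (rule Bochner_Integration.integrable_bound[where M=lborel and f="indicator {a..b} :: real \<Rightarrow> real"])
  show "integrable lborel (indicator {a..b} :: real \<Rightarrow> real)"
    by (rule integrable_real_indicator) (auto simp: emeasure_lborel_Icc_eq)
  show "AE x in lborel. norm (indicator {a..b} x * f x) \<le> norm (indicator {a..b} x :: real)"
    using assms(2) by (auto simp: indicator_def abs_mult)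
qed (use assms(1) in auto)

lemma integral_unif_step:
  assumes "0 \<le> d" "d \<le> 1"
  shows "(\<integral>y. c * indicator {d..1} y + indicator {1<..} y \<partial>unif 0) = c * (1 - d)"
    and "(\<integral>y. c * indicator {d..1} y + indicator {1<..} y \<partial>unif d) = c * (1 - d) + d"
proof -
  have meas: "measure (unif l) S = measure lborel ({l..l+1} \<inter> S)" if "S \<in> sets borel" for l S
    unfolding unif_def using that by (subst measure_uniform_measure) auto
  have int: "(\<integral>y. c * indicator {d..1} y + indicator {1<..} y \<partial>unif l)
      = c * measure lborel ({l..l+1} \<inter> {d..1}) + measure lborel ({l..l+1} \<inter> {1<..})" for l
  proof -
    interpret prob_space "unif l" by (rule prob_space_unif)
    show ?thesis
      by (subst Bochner_Integration.integral_add)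
        (auto intro!: integrable_real_indicator simp: meas emeasure_finite less_top[symmetric])
  qed
  have "{0..0+1} \<inter> {d..1} = {d..1}" "{0..0+1} \<inter> {1<..} = ({} :: real set)"
    "{d..d+1} \<inter> {d..1} = {d..1}" "{d..d+1} \<inter> {1<..} = {1<..d+1}"
    using assms by auto
  then show "(\<integral>y. c * indicator {d..1} y + indicator {1<..} y \<partial>unif 0) = c * (1 - d)"
    and "(\<integral>y. c * indicator {d..1} y + indicator {1<..} y \<partial>unif d) = c * (1 - d) + d"
    using int[of 0] int[of d] assms by simp_all
qed

lemma integral_unif_Icc_bounds:
  fixes f :: "real \<Rightarrow> real"
  assumes f: "f \<in> borel_measurable borel" "\<And>y. 0 \<le> f y" "\<And>y. f y \<le> 1" and d: "0 \<le> d" "d \<le> 1"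
  defines "J \<equiv> \<integral>y. indicator {d..1} y * f y \<partial>lborel"
  shows "0 \<le> J" "J \<le> 1 - d" "J \<le> (\<integral>y. f y \<partial>unif 0)" "(\<integral>y. f y \<partial>unif d) \<le> J + d"
proof -
  have f_abs: "\<bar>f y\<bar> \<le> 1" for y using f(2,3)[of y] by simp
  note int = integrable_indicator_Icc_mult[OF f(1) f_abs]
  have int_Icc: "integrable lborel (indicator {l..u} :: real \<Rightarrow> real)" for l u
    by (rule integrable_real_indicator) (auto simp: emeasure_lborel_Icc_eq)
  show "0 \<le> J" unfolding J_def using f(2) by (intro Bochner_Integration.integral_nonneg) simp
  have "J \<le> (\<integral>y. indicator {d..1} y \<partial>lborel)"
    unfolding J_def using f(3)
    by (intro Bochner_Integration.integral_mono int int_Icc) (auto simp: indicator_def)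
  then show "J \<le> 1 - d" using d by simp
  have "J \<le> (\<integral>y. indicator {0..0+1} y * f y \<partial>lborel)"
    unfolding J_def using f(2) d int
    by (intro Bochner_Integration.integral_mono) (auto simp: indicator_def)
  then show "J \<le> (\<integral>y. f y \<partial>unif 0)" using integral_unif[OF f(1), of 0] by simp
  have "(\<integral>y. f y \<partial>unif d) = (\<integral>y. indicator {d..d+1} y * f y \<partial>lborel)"
    by (rule integral_unif[OF f(1)])
  also have "\<dots> \<le> (\<integral>y. indicator {d..1} y * f y + indicator {1..1+d} y \<partial>lborel)"
    using f(2,3) d
    by (intro Bochner_Integration.integral_mono Bochner_Integration.integrable_add int int_Icc)
      (auto simp: indicator_def)
  also have "\<dots> = J + d"
    unfolding J_def using d int int_Icc by (subst Bochner_Integration.integral_add) auto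
  finally show "(\<integral>y. f y \<partial>unif d) \<le> J + d" .
qed

lemma tradeoff_unif:
  assumes d: "0 \<le> d" "d \<le> 1" and a: "0 \<le> a" "a \<le> 1"
  shows "tradeoff (unif 0) (unif d) a = max (1 - a - d) 0"
proof (rule antisym)
  have le: "tradeoff (unif 0) (unif d) a \<le> 1 - c * (1 - d) - d"
    if c: "0 \<le> c" "c \<le> 1" "c * (1 - d) \<le> a" for c
  proof -
    let ?w = "\<lambda>y. c * indicator {d..1} y + indicator {1<..} y :: real"
    have "rejection_rule (unif 0) ?w" using c by (auto simp: rejection_rule_def indicator_def)
    then have "tradeoff (unif 0) (unif d) a \<le> 1 - (\<integral>y. ?w y \<partial>unif d)"
      using c integral_unif_step(1)[OF d, of c]
      by (intro tradeoff_le_rejection_rule[OF prob_space_unif]) auto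
    then show ?thesis using integral_unif_step(2)[OF d, of c] by simp
  qed
  show "tradeoff (unif 0) (unif d) a \<le> max (1 - a - d) 0"
  proof (cases "a \<le> 1 - d")
    case True
    then have "a / (1 - d) * (1 - d) = a" using a by (cases "d = 1") auto
    then show ?thesis using le[of "a / (1 - d)"] True a d by (simp add: divide_le_eq)
  next
    case False
    then show ?thesis using le[of 1] by simp
  qed
  show "max (1 - a - d) 0 \<le> tradeoff (unif 0) (unif d) a"
  proof (rule le_tradeoffI[OF a(1)])
    fix \<phi> assume \<phi>: "rejection_rule (unif 0) \<phi>" "(\<integral>x. \<phi> x \<partial>unif 0) \<le> a"
    then have meas: "\<phi> \<in> borel_measurable borel" and "\<And>y. 0 \<le> \<phi> y" "\<And>y. \<phi> y \<le> 1"
      by (auto simp: rejection_rule_def)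
    note bounds = integral_unif_Icc_bounds[OF this d]
    have "rejection_rule (unif d) \<phi>" using \<phi>(1) rejection_rule_cong_sets[of "unif 0" "unif d"] by simp
    then have "(\<integral>x. \<phi> x \<partial>unif d) \<le> 1" by (rule rejection_rule_integral(3)[OF prob_space_unif])
    then show "max (1 - a - d) 0 \<le> 1 - (\<integral>x. \<phi> x \<partial>unif d)" using bounds \<phi>(2) by simp
  qed
qed

lemma rejection_rule_integral_pair:
  assumes "prob_space P" "prob_space M" "rejection_rule (P \<Otimes>\<^sub>M M) \<phi>"
  shows "(\<integral>z. \<phi> z \<partial>(P \<Otimes>\<^sub>M M)) = (\<integral>x. (\<integral>y. \<phi> (x, y) \<partial>M) \<partial>P)"
    and "integrable P (\<lambda>x. \<integral>y. \<phi> (x, y) \<partial>M)"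
proof -
  interpret pair_prob_space P M
    using assms(1,2) by (simp add: pair_prob_space_def pair_sigma_finite_def prob_space_imp_sigma_finite)
  have "integrable (P \<Otimes>\<^sub>M M) \<phi>" by (rule rejection_rule_integral(1)[OF prob_space_axioms assms(3)])
  then show "(\<integral>z. \<phi> z \<partial>(P \<Otimes>\<^sub>M M)) = (\<integral>x. (\<integral>y. \<phi> (x, y) \<partial>M) \<partial>P)"
    and "integrable P (\<lambda>x. \<integral>y. \<phi> (x, y) \<partial>M)"
    by (simp_all add: integral_fst' integrable_fst')
qed

lemma pair_unif_product_test:
  assumes P: "prob_space P" and \<psi>: "rejection_rule P \<psi>" and d: "0 \<le> d" "d \<le> 1"
  defines "\<phi> \<equiv> \<lambda>z. \<psi> (fst z) * indicator {d..1} (snd z) + indicator {1<..} (snd z)"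
  shows "rejection_rule (P \<Otimes>\<^sub>M unif l) \<phi>"
    and "(\<integral>z. \<phi> z \<partial>(P \<Otimes>\<^sub>M unif 0)) = (1 - d) * (\<integral>x. \<psi> x \<partial>P)"
    and "(\<integral>z. \<phi> z \<partial>(P \<Otimes>\<^sub>M unif d)) = (1 - d) * (\<integral>x. \<psi> x \<partial>P) + d"
proof -
  have [measurable]: "\<psi> \<in> borel_measurable P" and \<psi>01: "\<forall>x\<in>space P. 0 \<le> \<psi> x \<and> \<psi> x \<le> 1"
    using \<psi> by (auto simp: rejection_rule_def)
  show test: "rejection_rule (P \<Otimes>\<^sub>M unif l) \<phi>" for l
    unfolding rejection_rule_def \<phi>_def using \<psi>01 by (auto simp: space_pair_measure indicator_def)
  have "(\<integral>z. \<phi> z \<partial>(P \<Otimes>\<^sub>M unif l)) = (\<integral>x. \<psi> x * (1 - d) + (if l = d then d else 0) \<partial>P)"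
    if "l = 0 \<or> l = d" for l
    using rejection_rule_integral_pair(1)[OF P prob_space_unif test] integral_unif_step[OF d] that
    unfolding \<phi>_def by auto
  moreover have "integrable P \<psi>" by (rule rejection_rule_integral(1)[OF P \<psi>])
  then have "(\<integral>x. \<psi> x * (1 - d) + c \<partial>P) = (1 - d) * (\<integral>x. \<psi> x \<partial>P) + c" for c
    using prob_space.prob_space[OF P] finite_measure.integrable_const[OF prob_space.finite_measure[OF P]]
    by (subst Bochner_Integration.integral_add) auto
  ultimately show "(\<integral>z. \<phi> z \<partial>(P \<Otimes>\<^sub>M unif 0)) = (1 - d) * (\<integral>x. \<psi> x \<partial>P)"
    and "(\<integral>z. \<phi> z \<partial>(P \<Otimes>\<^sub>M unif d)) = (1 - d) * (\<integral>x. \<psi> x \<partial>P) + d"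
    by auto
qed

text \<open>Any test on the product is dominated by a product test: average it over the
  part \<open>[d, 1]\<close> of the second coordinate where both uniform laws have density one.\<close>
lemma pair_unif_test_dominated:
  assumes P: "prob_space P" and Q: "prob_space Q" and PQ: "sets P = sets Q"
    and d: "0 \<le> d" "d < 1" and \<phi>: "rejection_rule (P \<Otimes>\<^sub>M unif 0) \<phi>"
  obtains \<psi> where "rejection_rule P \<psi>"
    and "(1 - d) * (\<integral>x. \<psi> x \<partial>P) \<le> (\<integral>z. \<phi> z \<partial>(P \<Otimes>\<^sub>M unif 0))"
    and "(\<integral>z. \<phi> z \<partial>(Q \<Otimes>\<^sub>M unif d)) \<le> (1 - d) * (\<integral>x. \<psi> x \<partial>Q) + d"
proof -
  have sets_pair: "sets (P \<Otimes>\<^sub>M lborel) = sets (P \<Otimes>\<^sub>M unif 0)"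
    "sets (Q \<Otimes>\<^sub>M unif d) = sets (P \<Otimes>\<^sub>M unif 0)"
    using PQ by (auto intro!: sets_pair_measure_cong)
  have [measurable]: "\<phi> \<in> borel_measurable (P \<Otimes>\<^sub>M lborel)"
    and \<phi>01: "\<And>x y. x \<in> space P \<Longrightarrow> 0 \<le> \<phi> (x, y) \<and> \<phi> (x, y) \<le> 1"
    using \<phi> measurable_cong_sets[OF sets_pair(1) refl]
      by (auto simp: rejection_rule_def space_pair_measure)
  have \<phi>Q: "rejection_rule (Q \<Otimes>\<^sub>M unif d) \<phi>" using \<phi> rejection_rule_cong_sets[OF sets_pair(2)] by simp
  define J where "J x = (\<integral>y. indicator {d..1} y * \<phi> (x, y) \<partial>lborel)" for x
  have slice: "(\<lambda>y. \<phi> (x, y)) \<in> borel_measurable borel" if "x \<in> space P" for x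
    using measurable_Pair2[OF _ that, of \<phi> lborel] by simp
  note bounds = integral_unif_Icc_bounds[OF slice _ _ d(1) less_imp_le[OF d(2)], folded J_def]
  define \<psi> where "\<psi> x = J x / (1 - d)" for x
  have J_eq: "J x = (1 - d) * \<psi> x" for x using d unfolding \<psi>_def by simp
  have [measurable]: "J \<in> borel_measurable P" unfolding J_def by measurable
  have \<psi>: "rejection_rule P \<psi>"
    unfolding rejection_rule_def \<psi>_def using bounds(1,2) \<phi>01 d by (auto simp: divide_le_eq)
  have int_\<psi>: "integrable M \<psi>" if "prob_space M" "sets M = sets P" for M
    using rejection_rule_integral(1)[OF that(1)] \<psi> rejection_rule_cong_sets[OF that(2)] by simp
  have "(1 - d) * (\<integral>x. \<psi> x \<partial>P) = (\<integral>x. J x \<partial>P)" unfolding J_eq by simp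
  also have "\<dots> \<le> (\<integral>x. (\<integral>y. \<phi> (x, y) \<partial>unif 0) \<partial>P)"
    using bounds(3) \<phi>01 int_\<psi>[OF P] rejection_rule_integral_pair(2)[OF P prob_space_unif \<phi>]
    unfolding J_eq by (intro Bochner_Integration.integral_mono) auto
  also have "\<dots> = (\<integral>z. \<phi> z \<partial>(P \<Otimes>\<^sub>M unif 0))"
    by (rule rejection_rule_integral_pair(1)[OF P prob_space_unif \<phi>, symmetric])
  finally have P_le: "(1 - d) * (\<integral>x. \<psi> x \<partial>P) \<le> (\<integral>z. \<phi> z \<partial>(P \<Otimes>\<^sub>M unif 0))" .
  have int_Q: "integrable Q (\<lambda>x. (1 - d) * \<psi> x + d)"
    using int_\<psi>[OF Q PQ[symmetric]] finite_measure.integrable_const[OF prob_space.finite_measure[OF Q]]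
    by (intro Bochner_Integration.integrable_add integrable_mult_right)
  have "(\<integral>z. \<phi> z \<partial>(Q \<Otimes>\<^sub>M unif d)) = (\<integral>x. (\<integral>y. \<phi> (x, y) \<partial>unif d) \<partial>Q)"
    by (rule rejection_rule_integral_pair(1)[OF Q prob_space_unif \<phi>Q])
  also have "\<dots> \<le> (\<integral>x. (1 - d) * \<psi> x + d \<partial>Q)"
    using bounds(4) \<phi>01 int_Q rejection_rule_integral_pair(2)[OF Q prob_space_unif \<phi>Q]
      sets_eq_imp_space_eq[OF PQ]
    unfolding J_eq by (intro Bochner_Integration.integral_mono) auto
  also have "\<dots> = (1 - d) * (\<integral>x. \<psi> x \<partial>Q) + d"
    using int_\<psi>[OF Q PQ[symmetric]] prob_space.prob_space[OF Q]
      finite_measure.integrable_const[OF prob_space.finite_measure[OF Q]]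
    by (subst Bochner_Integration.integral_add) auto
  finally show ?thesis by (rule that[OF \<psi> P_le])
qed

lemma tradeoff_nonneg:
  assumes "prob_space Q" "sets Q = sets P" "0 \<le> a"
  shows "0 \<le> tradeoff P Q a"
proof (rule le_tradeoffI[OF assms(3)])
  fix \<phi> assume "rejection_rule P \<phi>"
  then have "rejection_rule Q \<phi>" using rejection_rule_cong_sets[OF assms(2)] by simp
  then show "0 \<le> 1 - (\<integral>x. \<phi> x \<partial>Q)" using rejection_rule_integral(3)[OF assms(1)] by simp
qed

lemma tradeoff_eq_0:
  assumes "prob_space P" "prob_space Q" "sets Q = sets P" "1 \<le> a"
  shows "tradeoff P Q a = 0"
proof (rule antisym)
  have "rejection_rule P (\<lambda>_. 1)" by (simp add: rejection_rule_def)
  then have "tradeoff P Q a \<le> 1 - (\<integral>x. 1 \<partial>Q)"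
    using assms prob_space.prob_space[OF assms(1)] by (intro tradeoff_le_rejection_rule) auto
  then show "tradeoff P Q a \<le> 0" using prob_space.prob_space[OF assms(2)] by simp
  show "0 \<le> tradeoff P Q a" using assms(2-4) by (intro tradeoff_nonneg) auto
qed

lemma tradeoff_pair_unif_le:
  fixes P Q :: "'a measure"
  assumes P: "prob_space P" and Q: "prob_space Q" and PQ: "sets P = sets Q"
    and d: "0 \<le> d" "d < 1" and a: "0 \<le> a"
  shows "tradeoff (P \<Otimes>\<^sub>M unif 0) (Q \<Otimes>\<^sub>M unif d) a \<le> (1 - d) * tradeoff P Q (a / (1 - d))"
proof -
  let ?T = "tradeoff (P \<Otimes>\<^sub>M unif 0) (Q \<Otimes>\<^sub>M unif d) a"
  have PQ_pair: "prob_space (Q \<Otimes>\<^sub>M unif d)" "sets (Q \<Otimes>\<^sub>M unif d) = sets (P \<Otimes>\<^sub>M unif 0)"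
    using prob_space_pair[OF Q prob_space_unif] PQ by (auto intro!: sets_pair_measure_cong)
  have "?T / (1 - d) \<le> tradeoff P Q (a / (1 - d))"
  proof (rule le_tradeoffI)
    fix \<psi> assume \<psi>: "rejection_rule P \<psi>" "(\<integral>x. \<psi> x \<partial>P) \<le> a / (1 - d)"
    have "rejection_rule Q \<psi>" using \<psi>(1) rejection_rule_cong_sets[OF PQ] by simp
    note test_P = pair_unif_product_test[OF P \<psi>(1) d(1) less_imp_le[OF d(2)]]
      and test_Q = pair_unif_product_test[OF Q this d(1) less_imp_le[OF d(2)]]
    have "?T \<le> 1 - (\<integral>z. \<psi> (fst z) * indicator {d..1} (snd z) + indicator {1<..} (snd z)
        \<partial>(Q \<Otimes>\<^sub>M unif d))"
      using test_P(1,2) \<psi>(2) d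
      by (intro tradeoff_le_rejection_rule[OF PQ_pair]) (auto simp: le_divide_eq mult.commute)
    also have "\<dots> = (1 - d) * (1 - (\<integral>x. \<psi> x \<partial>Q))" using test_Q(3) by (simp add: algebra_simps)
    finally show "?T / (1 - d) \<le> 1 - (\<integral>x. \<psi> x \<partial>Q)" using d by (simp add: divide_le_eq mult.commute)
  qed (use a d in simp)
  then show ?thesis using d by (simp add: divide_le_eq mult.commute)
qed

lemma tradeoff_pair_unif_ge:
  fixes P Q :: "'a measure"
  assumes P: "prob_space P" and Q: "prob_space Q" and PQ: "sets P = sets Q"
    and d: "0 \<le> d" "d < 1" and a: "0 \<le> a"
  shows "(1 - d) * tradeoff P Q (a / (1 - d)) \<le> tradeoff (P \<Otimes>\<^sub>M unif 0) (Q \<Otimes>\<^sub>M unif d) a"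
proof (rule le_tradeoffI[OF a])
  fix \<phi> assume \<phi>: "rejection_rule (P \<Otimes>\<^sub>M unif 0) \<phi>" "(\<integral>z. \<phi> z \<partial>(P \<Otimes>\<^sub>M unif 0)) \<le> a"
  obtain \<psi> where \<psi>: "rejection_rule P \<psi>" "(1 - d) * (\<integral>x. \<psi> x \<partial>P) \<le> (\<integral>z. \<phi> z \<partial>(P \<Otimes>\<^sub>M unif 0))"
    and \<psi>Q: "(\<integral>z. \<phi> z \<partial>(Q \<Otimes>\<^sub>M unif d)) \<le> (1 - d) * (\<integral>x. \<psi> x \<partial>Q) + d"
    using pair_unif_test_dominated[OF P Q PQ d \<phi>(1)] by blast
  have "(\<integral>x. \<psi> x \<partial>P) \<le> a / (1 - d)" using \<psi>(2) \<phi>(2) d by (simp add: le_divide_eq mult.commute)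
  then have "tradeoff P Q (a / (1 - d)) \<le> 1 - (\<integral>x. \<psi> x \<partial>Q)"
    by (rule tradeoff_le_rejection_rule[OF Q PQ[symmetric] \<psi>(1)])
  then have "(1 - d) * tradeoff P Q (a / (1 - d)) \<le> (1 - d) * (1 - (\<integral>x. \<psi> x \<partial>Q))"
    using d by (simp add: mult_left_mono)
  with \<psi>Q show "(1 - d) * tradeoff P Q (a / (1 - d)) \<le> 1 - (\<integral>z. \<phi> z \<partial>(Q \<Otimes>\<^sub>M unif d))"
    by (simp add: algebra_simps)
qed

lemma tradeoff_pair_unif:
  fixes P Q :: "'a measure"
  assumes "prob_space P" "prob_space Q" "sets P = sets Q" "0 \<le> d" "d < 1" "0 \<le> a"
  shows "tradeoff (P \<Otimes>\<^sub>M unif 0) (Q \<Otimes>\<^sub>M unif d) a = (1 - d) * tradeoff P Q (a / (1 - d))"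
  using tradeoff_pair_unif_le[OF assms] tradeoff_pair_unif_ge[OF assms] by (rule antisym)

lemma tradeoff_pair_unif_eq_scaled:
  fixes P Q :: "'a measure"
  assumes P: "prob_space P" and Q: "prob_space Q" and PQ: "sets P = sets Q"
    and g: "\<forall>a\<in>{0..1}. tradeoff P Q a = g a" and d: "0 \<le> d" "d < 1" and a: "a \<in> {0..1}"
  shows "tradeoff (P \<Otimes>\<^sub>M unif 0) (Q \<Otimes>\<^sub>M unif d) a
    = (if a \<le> 1 - d then (1 - d) * g (a / (1 - d)) else 0)"
proof (cases "a \<le> 1 - d")
  case True
  then have "a / (1 - d) \<in> {0..1}" using a d by (auto simp: divide_le_eq)
  then show ?thesis using True tradeoff_pair_unif[OF P Q PQ d] a g by simp
next
  case False
  then have "1 \<le> a / (1 - d)" using d by (simp add: le_divide_eq)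
  then show ?thesis
    using False tradeoff_pair_unif[OF P Q PQ d] tradeoff_eq_0[OF P Q PQ[symmetric]] a by simp
qed

theorem mainTheorem13:
  fixes f g h k :: "real \<Rightarrow> real" and \<delta> astar dhat :: real
  assumes f_tr: "is_tradeoff f" and f_sym: "symmetric_tradeoff f"
    and g_tr: "is_tradeoff g" and g_sym: "symmetric_tradeoff g"
    and g_strict: "\<forall>x\<in>{0..1}. \<forall>y\<in>{0..1}. x < y \<longrightarrow> g y < g x"
    and astar: "0 \<le> astar" "astar \<le> 1" "g astar = astar"
    and \<delta>: "0 < \<delta>" "\<delta> < astar"
    and hyp: "\<forall>a\<in>{astar - \<delta>..1 - \<delta>}. f a \<ge> g (a + \<delta>) - \<delta>"
    and h_def: "\<And>a. h a = max (g (min (a + \<delta>) 1) - \<delta>) 0"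
    and dhat_def: "dhat = max (\<delta> / astar) ((1 - g \<delta>) + \<delta>)"
    and k_def: "\<And>a. k a = (if a \<le> 1 - dhat then (1 - dhat) * g (a / (1 - dhat)) else 0)"
  shows "is_tradeoff h \<and> symmetric_tradeoff h \<and> is_tradeoff k \<and> symmetric_tradeoff k
    \<and> (\<forall>a\<in>{0..1}. f a \<ge> h a \<and> h a \<ge> k a)
    \<and> (\<forall>a\<in>{0..1}. tradeoff (unif 0) (unif dhat) a = max (1 - a - dhat) 0)
    \<and> (\<forall>(P::'a measure) Q. prob_space P \<and> prob_space Q \<and> sets P = sets Q
         \<and> (\<forall>a\<in>{0..1}. tradeoff P Q a = g a) \<longrightarrow>
         (\<forall>a\<in>{0..1}. tradeoff (P \<Otimes>\<^sub>M unif 0) (Q \<Otimes>\<^sub>M unif dhat) a = k a))"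
proof -
  have strict: "strict_antimono_on {0..1} g" using g_strict by (simp add: monotone_on_def)
  define s where "s = 1 - dhat"
  have "astar < g \<delta>" using g_strict[rule_format, of \<delta> astar] astar \<delta> by auto
  moreover have "0 < \<delta> / astar" "\<delta> / astar < 1" using \<delta> by simp_all
  ultimately have dhat: "\<delta> / astar \<le> dhat" "1 - g \<delta> + \<delta> \<le> dhat" "0 < dhat" "dhat < 1"
    using \<delta> unfolding dhat_def by (auto simp: less_max_iff_disj)
  then have s: "0 < s" "s \<le> 1" "s + \<delta> \<le> g \<delta>" and \<delta>_le: "\<delta> \<le> (1 - s) * astar"
    using \<delta> unfolding s_def by (auto simp: pos_divide_le_eq)
  have h_eq: "h = tradeoff_rescale 1 \<delta> g" by (simp add: fun_eq_iff h_def tradeoff_rescale_shift)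
  have k_eq: "k x = tradeoff_rescale s 0 g x" if "x \<in> {0..1}" for x
    using that s tradeoff_rescale_scale[OF g_tr] unfolding k_def s_def by simp
  have h: "is_tradeoff h" "symmetric_tradeoff h"
    unfolding h_eq using is_tradeoff_rescale[OF g_tr] symmetric_tradeoff_rescale[OF g_tr g_sym strict] \<delta>
    by auto
  have k: "is_tradeoff k" "symmetric_tradeoff k"
    using is_tradeoff_cong[OF k_eq] symmetric_tradeoff_cong[OF k_eq] s
      is_tradeoff_rescale[OF g_tr] symmetric_tradeoff_rescale[OF g_tr g_sym strict] by auto
  have "f a \<ge> h a \<and> h a \<ge> k a" if "a \<in> {0..1}" for a
    unfolding h_eq k_eq[OF that]
    using tradeoff_rescale_shift_le_tradeoff[OF f_tr f_sym g_tr g_sym strict astar(2,3) _ _ _ that]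
      tradeoff_rescale_scale_le_shift[OF g_tr g_sym strict astar \<delta>(1) \<delta>_le s that] \<delta> hyp by auto
  moreover have "tradeoff (unif 0) (unif dhat) a = max (1 - a - dhat) 0" if "a \<in> {0..1}" for a
    using tradeoff_unif s that unfolding s_def by auto
  moreover have "tradeoff (P \<Otimes>\<^sub>M unif 0) (Q \<Otimes>\<^sub>M unif dhat) a = k a"
    if "prob_space P" "prob_space Q" "sets P = sets Q" "\<forall>a\<in>{0..1}. tradeoff P Q a = g a" "a \<in> {0..1}"
    for P Q :: "'a measure" and a
    using tradeoff_pair_unif_eq_scaled[OF that(1-4) _ _ that(5)] s unfolding k_def s_def by auto
  ultimately show ?thesis using h k by blast
qed

end
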